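(* Let $\Pi$ be a finite ground disjunctive logic program (viewed as a set of propositional formulas) that has at least one equilibrium model (answer set), and let $V\subseteq V(\Pi)$. Then there is a finite disjunctive program $\Pi'$ with $V(\Pi')\subseteq V$ such that $\Pi\mathbin{|\!\sim}\psi$ for every $\psi\in\Pi'$, and for every formula $\varphi$ that is a conjunction of literals over $V$, if $\Pi\mathbin{|\!\sim}\varphi$ then $\Pi'\mathbin{|\!\sim}\varphi$.
   Context: A ground disjunctive rule $K_1\lor\dots\lor K_k\leftarrow L_1,\dots,L_m,not\,L_{m+1},\dots,not\,L_n$ (all $K_j,L_i$ atoms) is identified with the propositional formula $L_1\land\dots\land L_m\land\neg L_{m+1}\land\dots\land\neg L_n\to K_1\lor\dots\lor K_k$; a disjunctive program is a finite set of such rules. A literal is an atom $a$ or its negation $\neg a$. $V(\cdot)$ is the set of atoms occurring. Here-and-there logic $\mathbf{HT}(W)$ over atom set $W$: interpretations are pairs $\langle H,T\rangle$, $H\subseteq T\subseteq W$, viewed as two-world Kripke models ($h\le t$; atoms true at $h$: $H$, at $t$: $T$) with intuitionistic Kripke clauses, $\neg\varphi:=\varphi\to\bot$; $\mathcal M\models\varphi$ iff $\varphi$ true at both worlds. An equilibrium model of $\Pi$ over $W$ is a model $\langle T,T\rangle$ of $\Pi$ with no model $\langle H,T\rangle$ of $\Pi$ with $H\subsetneq T$ (for disjunctive programs, $\langle T,T\rangle$ is an equilibrium model iff $T$ is an answer set). Entailment $\mathbin{|\!\sim}$ (closed-world): if $\Pi$ is non-empty and has equilibrium models, $\Pi\mathbin{|\!\sim}\varphi$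 iff every equilibrium model of $\Pi$ over $V(\Pi)\cup V(\varphi)$ satisfies $\varphi$; otherwise $\Pi\mathbin{|\!\sim}\varphi$ iff $\varphi$ holds in every $\mathbf{HT}$-model of $\Pi$. *)

theory Defs
  imports Main
begin

datatype 'a form = Atom 'a | Bot | And "'a form" "'a form" | Or "'a form" "'a form"
  | Imp "'a form" "'a form"

definition Neg :: "'a form \<Rightarrow> 'a form" where "Neg \<phi> = Imp \<phi> Bot"
definition Top :: "'a form" where "Top = Neg Bot"

fun atoms :: "'a form \<Rightarrow> 'a set" where
  "atoms (Atom a) = {a}"
| "atoms Bot = {}"
| "atoms (And \<phi> \<psi>) = atoms \<phi> \<union> atoms \<psi>"
| "atoms (Or \<phi> \<psi>) = atoms \<phi> \<union> atoms \<psi>"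
| "atoms (Imp \<phi> \<psi>) = atoms \<phi> \<union> atoms \<psi>"

definition atoms_set :: "'a form set \<Rightarrow> 'a set" where
  "atoms_set \<Pi> = (\<Union>\<phi>\<in>\<Pi>. atoms \<phi>)"

fun conj_list :: "'a form list \<Rightarrow> 'a form" where
  "conj_list [] = Top"
| "conj_list [\<phi>] = \<phi>"
| "conj_list (\<phi> # \<phi>s) = And \<phi> (conj_list \<phi>s)"

fun disj_list :: "'a form list \<Rightarrow> 'a form" where
  "disj_list [] = Bot"
| "disj_list [\<phi>] = \<phi>"
| "disj_list (\<phi> # \<phi>s) = Or \<phi> (disj_list \<phi>s)"

fun sat_t :: "'a set \<Rightarrow> 'a form \<Rightarrow> bool" where
  "sat_t T (Atom a) = (a \<in> T)"
| "sat_t T Bot = False"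
| "sat_t T (And \<phi> \<psi>) = (sat_t T \<phi> \<and> sat_t T \<psi>)"
| "sat_t T (Or \<phi> \<psi>) = (sat_t T \<phi> \<or> sat_t T \<psi>)"
| "sat_t T (Imp \<phi> \<psi>) = (sat_t T \<phi> \<longrightarrow> sat_t T \<psi>)"

fun sat_h :: "'a set \<Rightarrow> 'a set \<Rightarrow> 'a form \<Rightarrow> bool" where
  "sat_h H T (Atom a) = (a \<in> H)"
| "sat_h H T Bot = False"
| "sat_h H T (And \<phi> \<psi>) = (sat_h H T \<phi> \<and> sat_h H T \<psi>)"
| "sat_h H T (Or \<phi> \<psi>) = (sat_h H T \<phi> \<or> sat_h H T \<psi>)"
| "sat_h H T (Imp \<phi> \<psi>) =
     ((sat_h H T \<phi> \<longrightarrow> sat_h H T \<psi>) \<and> (sat_t T \<phi> \<longrightarrow> sat_t T \<psi>))"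

definition ht_sat :: "'a set \<Rightarrow> 'a set \<Rightarrow> 'a form \<Rightarrow> bool" where
  "ht_sat H T \<phi> = (sat_h H T \<phi> \<and> sat_t T \<phi>)"

definition ht_model :: "'a set \<Rightarrow> 'a set \<Rightarrow> 'a form set \<Rightarrow> bool" where
  "ht_model H T \<Pi> = (\<forall>\<phi>\<in>\<Pi>. ht_sat H T \<phi>)"

text \<open>Equilibrium model \<langle>T,T\<rangle> of \<Pi> over atom set W.\<close>
definition equilibrium_model :: "'a form set \<Rightarrow> 'a set \<Rightarrow> 'a set \<Rightarrow> bool" where
  "equilibrium_model \<Pi> W T =
     (T \<subseteq> W \<and> ht_model T T \<Pi> \<and> \<not> (\<exists>H. H \<subset> T \<and> ht_model H T \<Pi>))"

definition has_equilibrium_model :: "'a form set \<Rightarrow> bool" where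
  "has_equilibrium_model \<Pi> = (\<exists>T. equilibrium_model \<Pi> (atoms_set \<Pi>) T)"

definition entails :: "'a form set \<Rightarrow> 'a form \<Rightarrow> bool" (infix "|~" 50) where
  "\<Pi> |~ \<phi> =
    (if \<Pi> \<noteq> {} \<and> (\<exists>T. equilibrium_model \<Pi> (atoms_set \<Pi> \<union> atoms \<phi>) T)
     then (\<forall>T. equilibrium_model \<Pi> (atoms_set \<Pi> \<union> atoms \<phi>) T \<longrightarrow> ht_sat T T \<phi>)
     else (\<forall>H T. H \<subseteq> T \<longrightarrow> ht_model H T \<Pi> \<longrightarrow> ht_sat H T \<phi>))"

text \<open>Rule K1 v ... v Kk <- L1,...,Lm, not L(m+1), ..., not Ln
  (head, positive body, negative body; all atoms).\<close>
record 'a rule =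
  head :: "'a list"
  pos  :: "'a list"
  negb :: "'a list"

definition rule_form :: "'a rule \<Rightarrow> 'a form" where
  "rule_form r = Imp (conj_list (map Atom (pos r) @ map (\<lambda>a. Neg (Atom a)) (negb r)))
                     (disj_list (map Atom (head r)))"

definition prog_form :: "'a rule set \<Rightarrow> 'a form set" where
  "prog_form P = rule_form ` P"

definition disjunctive_program :: "'a rule set \<Rightarrow> bool" where
  "disjunctive_program P = finite P"

datatype 'a literal = PosL 'a | NegL 'a

fun lit_atom :: "'a literal \<Rightarrow> 'a" where
  "lit_atom (PosL a) = a" | "lit_atom (NegL a) = a"

fun lit_form :: "'a literal \<Rightarrow> 'a form" where
  "lit_form (PosL a) = Atom a" | "lit_form (NegL a) = Neg (Atom a)"

end

theory Submission
  imports Defs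
begin

(* Let C (resp. N) be the atoms of V that are true (resp. false) in every
   equilibrium model of \<Pi>, i.e. the cautious consequences of \<Pi> restricted to V.  Take for
   \<Pi>' the program consisting of a fact  a.  for each a in C and a constraint  <- a  for each
   a in N.  Then:
   - every rule of \<Pi>' is true in all equilibrium models of \<Pi>, hence entailed by \<Pi>;
   - \<Pi>' has exactly one equilibrium model, namely C (over any atom set containing C);
   - if \<Pi> entails a conjunction of V-literals, each positive literal lies in C and each
     negative one in N, so the conjunction holds in C and is entailed by \<Pi>'. *)

lemma sat_h_total: "sat_h T T \<phi> = sat_t T \<phi>"
  by (induction \<phi>) auto

lemma ht_sat_total: "ht_sat T T \<phi> = sat_t T \<phi>"
  by (simp add: ht_sat_def sat_h_total)

lemma sat_t_Top [simp]: "sat_t T Top"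
  by (simp add: Top_def Neg_def)

lemma sat_h_Top [simp]: "sat_h H T Top"
  by (simp add: Top_def Neg_def)

lemma sat_t_conj_list: "sat_t T (conj_list \<phi>s) = (\<forall>\<phi>\<in>set \<phi>s. sat_t T \<phi>)"
  by (induction \<phi>s rule: conj_list.induct) auto

lemma atoms_conj_list: "atoms (conj_list \<phi>s) = (\<Union>\<phi>\<in>set \<phi>s. atoms \<phi>)"
  by (induction \<phi>s rule: conj_list.induct) (auto simp: Top_def Neg_def)

lemma atoms_lit_form [simp]: "atoms (lit_form l) = {lit_atom l}"
  by (cases l) (auto simp: Neg_def)

lemma atoms_conj_lits: "atoms (conj_list (map lit_form ls)) = lit_atom ` set ls"
  by (auto simp: atoms_conj_list)

lemma finite_atoms_prog_form:
  assumes "disjunctive_program P"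
  shows "finite (atoms_set (prog_form P))"
proof -
  have "finite (atoms \<phi>)" for \<phi> :: "'a form" by (induction \<phi>) auto
  then show ?thesis
    using assms by (simp add: atoms_set_def prog_form_def disjunctive_program_def)
qed

lemma entails_iff_equilibrium:
  assumes "\<Pi> \<noteq> {}" and "has_equilibrium_model \<Pi>" and "atoms \<phi> \<subseteq> atoms_set \<Pi>"
  shows "\<Pi> |~ \<phi> \<longleftrightarrow> (\<forall>T. equilibrium_model \<Pi> (atoms_set \<Pi>) T \<longrightarrow> sat_t T \<phi>)"
proof -
  have "atoms_set \<Pi> \<union> atoms \<phi> = atoms_set \<Pi>" using assms(3) by blast
  then show ?thesis
    using assms(1,2) by (simp add: entails_def has_equilibrium_model_def ht_sat_total)
qed

definition fact_rule :: "'a \<Rightarrow> 'a rule" where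
  "fact_rule a = \<lparr>head = [a], pos = [], negb = []\<rparr>"

definition constraint_rule :: "'a \<Rightarrow> 'a rule" where
  "constraint_rule a = \<lparr>head = [], pos = [a], negb = []\<rparr>"

definition literal_program :: "'a set \<Rightarrow> 'a set \<Rightarrow> 'a rule set" where
  "literal_program C N = fact_rule ` C \<union> constraint_rule ` N"

lemma prog_form_literal_program:
  "prog_form (literal_program C N) = (\<lambda>a. Imp Top (Atom a)) ` C \<union> (\<lambda>a. Neg (Atom a)) ` N"
  by (simp add: literal_program_def prog_form_def rule_form_def fact_rule_def
      constraint_rule_def Neg_def image_Un image_image)

lemma atoms_set_literal_program: "atoms_set (prog_form (literal_program C N)) = C \<union> N"
  by (auto simp: prog_form_literal_program atoms_set_def Top_def Neg_def)

lemma ht_model_literal_program: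
  "ht_model H T (prog_form (literal_program C N)) \<longleftrightarrow>
     C \<subseteq> H \<and> C \<subseteq> T \<and> N \<inter> H = {} \<and> N \<inter> T = {}"
  unfolding prog_form_literal_program ht_model_def ht_sat_def ball_Un ball_simps
  by (auto simp: Neg_def)

text \<open>If C and N are disjoint, C is the unique equilibrium model: any model T already has
  the smaller model \<langle>C,T\<rangle>.\<close>
lemma equilibrium_model_literal_program:
  assumes "C \<inter> N = {}" and "C \<subseteq> W"
  shows "equilibrium_model (prog_form (literal_program C N)) W T \<longleftrightarrow> T = C"
proof
  assume eq: "equilibrium_model (prog_form (literal_program C N)) W T"
  then have "C \<subseteq> T" "N \<inter> T = {}"
    by (auto simp: equilibrium_model_def ht_model_literal_program)
  then have "ht_model C T (prog_form (literal_program C N))"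
    using assms(1) by (auto simp: ht_model_literal_program)
  with eq \<open>C \<subseteq> T\<close> show "T = C"
    unfolding equilibrium_model_def by blast
qed (use assms in \<open>auto simp: equilibrium_model_def ht_model_literal_program\<close>)

definition lit_decided :: "'a set \<Rightarrow> 'a set \<Rightarrow> 'a literal \<Rightarrow> bool" where
  "lit_decided C N l = (case l of PosL a \<Rightarrow> a \<in> C | NegL a \<Rightarrow> a \<in> N)"

lemma sat_t_decided_lit:
  assumes "C \<inter> N = {}" and "lit_decided C N l"
  shows "sat_t C (lit_form l)"
  using assms by (cases l) (auto simp: lit_decided_def Neg_def)

lemma literal_program_entails_conj:
  assumes disj: "C \<inter> N = {}" and ne: "ls \<noteq> []"
    and dec: "\<forall>l\<in>set ls. lit_decided C N l"
  shows "prog_form (literal_program C N) |~ conj_list (map lit_form ls)"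
proof -
  let ?\<Pi> = "prog_form (literal_program C N)" and ?\<phi> = "conj_list (map lit_form ls)"
  let ?W = "atoms_set ?\<Pi> \<union> atoms ?\<phi>"
  obtain l where l: "l \<in> set ls" using ne by (cases ls) auto
  have "lit_atom l \<in> C \<union> N"
    using dec l by (cases l) (fastforce simp: lit_decided_def)+
  then have "?\<Pi> \<noteq> {}" using atoms_set_literal_program[of C N] by (auto simp: atoms_set_def)
  moreover have "C \<subseteq> ?W" by (auto simp: atoms_set_literal_program)
  moreover have "sat_t C ?\<phi>"
    using dec sat_t_decided_lit[OF disj] by (auto simp: sat_t_conj_list)
  ultimately show ?thesis
    using equilibrium_model_literal_program[OF disj, of ?W]
    by (simp add: entails_def ht_sat_total)
qed

definition cautious_true :: "'a form set \<Rightarrow> 'a set \<Rightarrow> 'a set" where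
  "cautious_true \<Pi> V = {a \<in> V. \<forall>T. equilibrium_model \<Pi> (atoms_set \<Pi>) T \<longrightarrow> a \<in> T}"

definition cautious_false :: "'a form set \<Rightarrow> 'a set \<Rightarrow> 'a set" where
  "cautious_false \<Pi> V = {a \<in> V. \<forall>T. equilibrium_model \<Pi> (atoms_set \<Pi>) T \<longrightarrow> a \<notin> T}"

lemma cautious_disjoint:
  assumes "has_equilibrium_model \<Pi>"
  shows "cautious_true \<Pi> V \<inter> cautious_false \<Pi> V = {}"
  using assms by (auto simp: has_equilibrium_model_def cautious_true_def cautious_false_def)

lemma entails_cautious_literal_program:
  assumes "\<Pi> \<noteq> {}" and "has_equilibrium_model \<Pi>" and "V \<subseteq> atoms_set \<Pi>"
    and "\<psi> \<in> prog_form (literal_program (cautious_true \<Pi> V) (cautious_false \<Pi> V))"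
  shows "\<Pi> |~ \<psi>"
  using assms(4) unfolding prog_form_literal_program
proof (elim UnE imageE)
  fix a assume a: "a \<in> cautious_true \<Pi> V" and \<psi>: "\<psi> = Imp Top (Atom a)"
  then have "atoms \<psi> \<subseteq> atoms_set \<Pi>"
    using assms(3) by (auto simp: cautious_true_def Top_def Neg_def)
  then show ?thesis
    using a \<psi> by (simp add: entails_iff_equilibrium[OF assms(1,2)] cautious_true_def)
next
  fix a assume a: "a \<in> cautious_false \<Pi> V" and \<psi>: "\<psi> = Neg (Atom a)"
  then have "atoms \<psi> \<subseteq> atoms_set \<Pi>"
    using assms(3) by (auto simp: cautious_false_def Neg_def)
  then show ?thesis
    using a \<psi> by (simp add: entails_iff_equilibrium[OF assms(1,2)] cautious_false_def Neg_def)
qed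

lemma entailed_conj_decided:
  assumes "\<Pi> \<noteq> {}" and "has_equilibrium_model \<Pi>" and "V \<subseteq> atoms_set \<Pi>"
    and sub: "lit_atom ` set ls \<subseteq> V" and ent: "\<Pi> |~ conj_list (map lit_form ls)"
    and l: "l \<in> set ls"
  shows "lit_decided (cautious_true \<Pi> V) (cautious_false \<Pi> V) l"
proof -
  have "\<forall>T. equilibrium_model \<Pi> (atoms_set \<Pi>) T \<longrightarrow> sat_t T (conj_list (map lit_form ls))"
    using ent assms(1-3) sub by (simp add: entails_iff_equilibrium atoms_conj_lits)
  then have "\<forall>T. equilibrium_model \<Pi> (atoms_set \<Pi>) T \<longrightarrow> sat_t T (lit_form l)"
    using l by (auto simp: sat_t_conj_list)
  moreover have "lit_atom l \<in> V" using sub l by auto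
  ultimately show ?thesis
    by (cases l) (auto simp: lit_decided_def cautious_true_def cautious_false_def Neg_def)
qed

theorem proposition7:
  fixes P :: "'a rule set" and V :: "'a set"
  assumes "disjunctive_program P"
    and "has_equilibrium_model (prog_form P)"
    and "V \<subseteq> atoms_set (prog_form P)"
  shows "\<exists>P'. disjunctive_program P' \<and> atoms_set (prog_form P') \<subseteq> V
    \<and> (\<forall>\<psi>\<in>prog_form P'. prog_form P |~ \<psi>)
    \<and> (\<forall>ls. ls \<noteq> [] \<longrightarrow> lit_atom ` set ls \<subseteq> V \<longrightarrow>
          prog_form P |~ conj_list (map lit_form ls) \<longrightarrow>
          prog_form P' |~ conj_list (map lit_form ls))"
proof (cases "P = {}")
  case True
  then have "V = {}" using assms(3) by (simp add: prog_form_def atoms_set_def)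
  then show ?thesis
    by (intro exI[of _ "{}"]) (auto simp: disjunctive_program_def prog_form_def atoms_set_def)
next
  case False
  define \<Pi> where "\<Pi> = prog_form P"
  define C N where "C = cautious_true \<Pi> V" and "N = cautious_false \<Pi> V"
  have ne: "\<Pi> \<noteq> {}" using False by (simp add: \<Pi>_def prog_form_def)
  have "finite V"
    using finite_atoms_prog_form[OF assms(1)] assms(3) finite_subset by blast
  then have "disjunctive_program (literal_program C N)"
    by (simp add: disjunctive_program_def literal_program_def C_def N_def
        cautious_true_def cautious_false_def)
  moreover have "atoms_set (prog_form (literal_program C N)) \<subseteq> V"
    by (auto simp: atoms_set_literal_program C_def N_def cautious_true_def cautious_false_def)
  moreover have "\<forall>\<psi>\<in>prog_form (literal_program C N). \<Pi> |~ \<psi>"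
    using entails_cautious_literal_program[OF ne] assms(2,3) by (simp add: \<Pi>_def C_def N_def)
  moreover have "prog_form (literal_program C N) |~ conj_list (map lit_form ls)"
    if "ls \<noteq> []" "lit_atom ` set ls \<subseteq> V" "\<Pi> |~ conj_list (map lit_form ls)" for ls
    using literal_program_entails_conj[OF cautious_disjoint[OF assms(2)] that(1)]
      entailed_conj_decided[OF ne assms(2,3)[folded \<Pi>_def] that(2,3)]
    by (simp add: C_def N_def \<Pi>_def)
  ultimately show ?thesis unfolding \<Pi>_def by blast
qed

end
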